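(* Let $R$ be a finite local commutative ring with residue field of order $q$, let $K\le R^\times$, and suppose the cyclotomic scheme $\mathrm{Cyc}(K,R)$ is normal. Suppose that $K+I=K$ for some ideal $I$ of $R$ (where $K+I=\{k+x: k\in K, x\in I\}$). Then $I=\{0\}$ unless $q=2$. Moreover, if $q=2$, then $I\subseteq I_0$, where $I_0=\{x\in\mathrm{rad}(R):\ x\,\mathrm{rad}(R)=\{0\}\}$.
   Context: All rings have an identity. For a finite local commutative ring $R$, $\mathrm{rad}(R)$ is its unique maximal ideal and $R/\mathrm{rad}(R)$ its residue field. For a subgroup $K$ of $R^\times$, the cyclotomic scheme $\mathrm{Cyc}(K,R)$ is the pair $(R,\mathrm{Rel}(K,R))$, where $\mathrm{Rel}(K,R)$ is the set of binary relations $\{(x,y)\in R\times R:\ y-x\in rK\}$, $r\in R$. Its automorphism group $\mathrm{Aut}(\mathcal C)$ is the group of permutations $f$ of $R$ with $S^f=S$ for every $S\in\mathrm{Rel}(K,R)$. $\mathrm{A\Gamma L}_1(R)$ is the group of permutations $x\mapsto ax^\sigma+b$ with $a\in R^\times$, $b\in R$, $\sigma\in\mathrm{Aut}(R)$. The scheme is normal if $\mathrm{Aut}(\mathcal C)\le\mathrm{A\Gamma L}_1(R)$. *)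

theory Defs
  imports Main
begin

definition is_ideal :: "'a::comm_ring_1 set \<Rightarrow> bool" where
  "is_ideal I \<longleftrightarrow> 0 \<in> I \<and> (\<forall>x\<in>I. \<forall>y\<in>I. x + y \<in> I) \<and> (\<forall>r. \<forall>x\<in>I. r * x \<in> I)"

definition maximal_ideal :: "'a::comm_ring_1 set \<Rightarrow> bool" where
  "maximal_ideal M \<longleftrightarrow> is_ideal M \<and> M \<noteq> UNIV \<and>
     (\<forall>J. is_ideal J \<and> M \<subseteq> J \<longrightarrow> J = M \<or> J = UNIV)"

definition local_ring :: "'a::comm_ring_1 itself \<Rightarrow> bool" where
  "local_ring TYPE('a) \<longleftrightarrow> (\<exists>!M::'a set. maximal_ideal M)"

definition rad :: "'a::comm_ring_1 set" where
  "rad = (THE M. maximal_ideal M)"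

definition residue_field :: "'a::comm_ring_1 set set" where
  "residue_field = {(\<lambda>y. x + y) ` rad | x. True}"

definition unit_set :: "'a::comm_ring_1 set" where
  "unit_set = {x. x dvd 1}"

definition is_unit_subgroup :: "'a::comm_ring_1 set \<Rightarrow> bool" where
  "is_unit_subgroup K \<longleftrightarrow> K \<subseteq> unit_set \<and> 1 \<in> K \<and>
     (\<forall>x\<in>K. \<forall>y\<in>K. x * y \<in> K) \<and> (\<forall>x\<in>K. \<exists>y\<in>K. x * y = 1)"

definition cyc_rels :: "'a::comm_ring_1 set \<Rightarrow> ('a \<times> 'a) set set" where
  "cyc_rels K = {{(x, y). y - x \<in> (\<lambda>k. r * k) ` K} | r. True}"

definition cyc_aut :: "'a::comm_ring_1 set \<Rightarrow> ('a \<Rightarrow> 'a) set" where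
  "cyc_aut K = {f. bij f \<and> (\<forall>S\<in>cyc_rels K. (\<lambda>(x, y). (f x, f y)) ` S = S)}"

definition ring_aut :: "('a::comm_ring_1 \<Rightarrow> 'a) set" where
  "ring_aut = {\<sigma>. bij \<sigma> \<and> (\<forall>x y. \<sigma> (x + y) = \<sigma> x + \<sigma> y) \<and>
      (\<forall>x y. \<sigma> (x * y) = \<sigma> x * \<sigma> y) \<and> \<sigma> 1 = 1}"

definition AGammaL1 :: "('a::comm_ring_1 \<Rightarrow> 'a) set" where
  "AGammaL1 = {(\<lambda>x. a * \<sigma> x + b) | a b \<sigma>. a dvd 1 \<and> \<sigma> \<in> ring_aut}"

definition cyc_normal :: "'a::comm_ring_1 set \<Rightarrow> bool" where
  "cyc_normal K \<longleftrightarrow> cyc_aut K \<subseteq> AGammaL1"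

definition I0 :: "'a::comm_ring_1 set" where
  "I0 = {x \<in> rad. \<forall>y\<in>rad. x * y = 0}"

end

theory Submission
  imports Defs
begin

text \<open>
  If \<open>h : R \<rightarrow> R\<close> has all its difference quotients in \<open>I\<close>, then \<open>x \<mapsto> x + h x\<close> has
  all its difference quotients in \<open>1 + I \<subseteq> K\<close>, so it is an automorphism of \<open>Cyc(K,R)\<close>;
  by normality it is affine, hence \<open>h\<close> is additive up to the constant \<open>h 0\<close>.
  Since elements on different sides of \<open>rad(R)\<close> differ by a unit, any function that is
  zero on \<open>rad(R)\<close> and of the form \<open>c + d x\<close> (\<open>c, d \<in> I\<close>) off \<open>rad(R)\<close> has difference
  quotients in \<open>I\<close>. Additivity of \<open>x \<mapsto> d x\<close> off the radical at \<open>m + 1 = m + 1\<close>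
  (\<open>m \<in> rad(R)\<close>) gives \<open>d m = 0\<close>; additivity of the constant \<open>c\<close> off the radical at
  \<open>x - 1 = x + (-1)\<close> gives \<open>c = 0\<close>, provided some \<open>x\<close> with \<open>x, x - 1 \<notin> rad(R)\<close> exists,
  i.e. provided \<open>q \<noteq> 2\<close>.
\<close>

lemma ideal_0: "is_ideal I \<Longrightarrow> 0 \<in> I"
  unfolding is_ideal_def by blast

lemma ideal_add: "is_ideal I \<Longrightarrow> x \<in> I \<Longrightarrow> y \<in> I \<Longrightarrow> x + y \<in> I"
  unfolding is_ideal_def by blast

lemma ideal_mult_left: "is_ideal I \<Longrightarrow> x \<in> I \<Longrightarrow> r * x \<in> I"
  unfolding is_ideal_def by blast

lemma ideal_mult_right: "is_ideal I \<Longrightarrow> x \<in> I \<Longrightarrow> x * r \<in> I"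
  by (metis ideal_mult_left mult.commute)

lemma ideal_uminus: "is_ideal I \<Longrightarrow> x \<in> I \<Longrightarrow> - x \<in> I"
  using ideal_mult_left[of I x "- 1"] by simp

lemma ideal_diff: "is_ideal I \<Longrightarrow> x \<in> I \<Longrightarrow> y \<in> I \<Longrightarrow> x - y \<in> I"
  using ideal_add[of I x "- y"] ideal_uminus by fastforce

lemma ideal_eq_UNIV_if_unit:
  assumes "is_ideal I" "u \<in> I" "u dvd 1"
  shows "I = UNIV"
proof -
  from \<open>u dvd 1\<close> obtain v where "1 = u * v" by (auto simp: dvd_def)
  then have "1 \<in> I" using assms ideal_mult_right by metis
  then show ?thesis using ideal_mult_right[OF \<open>is_ideal I\<close>] by (metis UNIV_eq_I mult_1)
qed

lemma principal_ideal: "is_ideal (range (\<lambda>r. x * r))"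
  unfolding is_ideal_def
  by (auto simp: image_iff distrib_left mult.left_commute intro: exI[of _ 0])
    (metis distrib_left, metis mult.left_commute)

lemma ex_maximal_ideal_superset:
  fixes J :: "'a::{comm_ring_1,finite} set"
  assumes "is_ideal J" "J \<noteq> UNIV"
  shows "\<exists>M. maximal_ideal M \<and> J \<subseteq> M"
proof -
  let ?C = "{M. is_ideal M \<and> M \<noteq> UNIV}"
  obtain M where "M \<in> ?C" "J \<subseteq> M" "\<forall>M'\<in>?C. M \<subseteq> M' \<longrightarrow> M = M'"
    using finite_has_maximal2[of ?C J] assms by auto
  then have "maximal_ideal M"
    unfolding maximal_ideal_def by blast
  with \<open>J \<subseteq> M\<close> show ?thesis by blast
qed

lemma maximal_ideal_rad:
  assumes "local_ring TYPE('a::comm_ring_1)"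
  shows "maximal_ideal (rad :: 'a set)"
  using assms unfolding local_ring_def rad_def by (rule theI')

lemma maximal_ideal_eq_rad:
  assumes "local_ring TYPE('a::comm_ring_1)" "maximal_ideal (M :: 'a set)"
  shows "M = rad"
  using assms maximal_ideal_rad unfolding local_ring_def by blast

lemma ideal_rad:
  "local_ring TYPE('a::comm_ring_1) \<Longrightarrow> is_ideal (rad :: 'a set)"
  using maximal_ideal_rad unfolding maximal_ideal_def by blast

lemma proper_ideal_subset_rad:
  fixes J :: "'a::{comm_ring_1,finite} set"
  assumes "local_ring TYPE('a)" "is_ideal J" "J \<noteq> UNIV"
  shows "J \<subseteq> rad"
  using ex_maximal_ideal_superset[OF assms(2,3)] maximal_ideal_eq_rad[OF assms(1)] by blast

lemma unit_iff_notin_rad: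
  fixes x :: "'a::{comm_ring_1,finite}"
  assumes "local_ring TYPE('a)"
  shows "x dvd 1 \<longleftrightarrow> x \<notin> rad"
proof
  assume "x dvd 1"
  moreover have "(rad :: 'a set) \<noteq> UNIV"
    using maximal_ideal_rad[OF assms] unfolding maximal_ideal_def by blast
  ultimately show "x \<notin> rad"
    using ideal_eq_UNIV_if_unit ideal_rad[OF assms] by blast
next
  assume "x \<notin> rad"
  have "range (\<lambda>r. x * r) = UNIV"
  proof (rule ccontr)
    assume "range (\<lambda>r. x * r) \<noteq> UNIV"
    then have "x * 1 \<in> rad"
      using proper_ideal_subset_rad[OF assms principal_ideal[of x]] by blast
    then show False using \<open>x \<notin> rad\<close> by simp
  qed
  then show "x dvd 1"
    by (metis UNIV_I dvd_def rangeE)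
qed

lemma diff_notin_rad:
  fixes x y :: "'a::{comm_ring_1,finite}"
  assumes "local_ring TYPE('a)" "(x \<in> rad) \<noteq> (y \<in> rad)"
  shows "y - x \<notin> rad"
  using assms ideal_add[OF ideal_rad[OF assms(1)], of "y - x" x]
    ideal_diff[OF ideal_rad[OF assms(1)], of y "y - x"]
  by auto

lemma ideal_coset_subset:
  assumes "is_ideal J" "x - x' \<in> J"
  shows "(\<lambda>y. x + y) ` J \<subseteq> (\<lambda>y. x' + y) ` J"
proof
  fix z assume "z \<in> (\<lambda>y. x + y) ` J"
  then obtain y where "y \<in> J" "z = x' + ((x - x') + y)" by auto
  then show "z \<in> (\<lambda>y. x' + y) ` J"
    using ideal_add[OF assms(1,2)] by blast
qed

lemma ideal_coset_eq:
  assumes "is_ideal J" "x - x' \<in> J"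
  shows "(\<lambda>y. x + y) ` J = (\<lambda>y. x' + y) ` J"
  using ideal_coset_subset[OF assms] ideal_coset_subset[OF assms(1), of x' x]
    ideal_uminus[OF assms] by fastforce

lemma card_residue_field_eq_2:
  assumes local: "local_ring TYPE('a::{comm_ring_1,finite})"
    and two_classes: "\<forall>x::'a. x \<in> rad \<or> x - 1 \<in> rad"
  shows "card (residue_field :: 'a set set) = 2"
proof -
  let ?coset = "\<lambda>x::'a. (\<lambda>y. x + y) ` rad"
  have "(residue_field :: 'a set set) \<subseteq> {?coset 0, ?coset 1}"
  proof
    fix S :: "'a set" assume "S \<in> residue_field"
    then obtain x where "S = ?coset x"
      unfolding residue_field_def by blast
    moreover have "x - 0 \<in> rad \<or> x - 1 \<in> rad"
      using two_classes by simp
    ultimately show "S \<in> {?coset 0, ?coset 1}"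
      using ideal_coset_eq[OF ideal_rad[OF local]] by blast
  qed
  moreover have "{?coset 0, ?coset 1} \<subseteq> residue_field"
    unfolding residue_field_def by blast
  moreover have "1 \<notin> ?coset 0"
    using unit_iff_notin_rad[OF local, of 1] by simp
  moreover have "1 + 0 \<in> ?coset 1"
    using ideal_0[OF ideal_rad[OF local]] by blast
  ultimately show ?thesis
    unfolding card_2_iff by (metis add_0_right subset_antisym)
qed

lemma unit_subgroup_one: "is_unit_subgroup K \<Longrightarrow> 1 \<in> K"
  unfolding is_unit_subgroup_def by blast

lemma unit_subgroup_mult: "is_unit_subgroup K \<Longrightarrow> x \<in> K \<Longrightarrow> y \<in> K \<Longrightarrow> x * y \<in> K"
  unfolding is_unit_subgroup_def by blast

lemma unit_subgroup_unit: "is_unit_subgroup K \<Longrightarrow> x \<in> K \<Longrightarrow> x dvd 1"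
  unfolding is_unit_subgroup_def unit_set_def by blast

definition slopes_in :: "'a::comm_ring_1 set \<Rightarrow> ('a \<Rightarrow> 'a) \<Rightarrow> bool" where
  "slopes_in S f \<longleftrightarrow> (\<forall>x y. \<exists>s\<in>S. f y - f x = (y - x) * s)"

lemma cyc_aut_if_slopes_in:
  fixes K :: "'a::{comm_ring_1,finite} set"
  assumes K: "is_unit_subgroup K" and f: "slopes_in K f"
  shows "f \<in> cyc_aut K"
proof -
  have "inj f"
  proof (rule injI)
    fix x y assume "f x = f y"
    obtain u where "u \<in> K" "f y - f x = (y - x) * u"
      using f unfolding slopes_in_def by blast
    moreover from this obtain v where "1 = u * v"
      using unit_subgroup_unit[OF K] by (metis dvdE)
    ultimately have "y - x = (f y - f x) * v"
      by (metis mult.assoc mult_1_right)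
    then show "x = y" using \<open>f x = f y\<close> by simp
  qed
  have "(\<lambda>(x, y). (f x, f y)) ` S = S" if "S \<in> cyc_rels K" for S
  proof (rule endo_inj_surj)
    from that obtain r where S: "S = {(x, y). y - x \<in> (\<lambda>k. r * k) ` K}"
      unfolding cyc_rels_def by blast
    show "(\<lambda>(x, y). (f x, f y)) ` S \<subseteq> S"
    proof clarify
      fix x y assume "(x, y) \<in> S"
      then obtain k where "k \<in> K" "y - x = r * k"
        using S by blast
      moreover obtain u where "u \<in> K" "f y - f x = (y - x) * u"
        using f unfolding slopes_in_def by blast
      ultimately have "k * u \<in> K" "f y - f x = r * (k * u)"
        using unit_subgroup_mult[OF K] by (auto simp: mult.assoc)
      then show "(f x, f y) \<in> S" using S by blast
    qed
    show "inj_on (\<lambda>(x, y). (f x, f y)) S"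
      by (rule inj_onI) (auto dest: injD[OF \<open>inj f\<close>])
  qed simp
  then show ?thesis
    using \<open>inj f\<close> unfolding cyc_aut_def bij_def by (simp add: finite_UNIV_inj_surj)
qed

lemma AGammaL1_additive:
  assumes "f \<in> AGammaL1"
  shows "f (x + y) + f 0 = f x + f y"
proof -
  obtain a b \<sigma> where f: "f = (\<lambda>x. a * \<sigma> x + b)" and "\<sigma> \<in> ring_aut"
    using assms unfolding AGammaL1_def by blast
  then have "\<sigma> (x + y) = \<sigma> x + \<sigma> y" for x y
    unfolding ring_aut_def by blast
  moreover from this have "\<sigma> 0 = 0"
    by (metis add_cancel_right_right add_0)
  ultimately show ?thesis
    unfolding f by (simp add: algebra_simps)
qed

lemma additive_if_slopes_in_absorbed_ideal:
  fixes K I :: "'a::{comm_ring_1,finite} set"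
  assumes K: "is_unit_subgroup K" and normal: "cyc_normal K"
    and absorbs: "{k + x | k x. k \<in> K \<and> x \<in> I} = K"
    and h: "slopes_in I h"
  shows "h (x + y) + h 0 = h x + h y"
proof -
  have "slopes_in K (\<lambda>x. x + h x)"
    unfolding slopes_in_def
  proof (intro allI)
    fix x y
    obtain j where "j \<in> I" "h y - h x = (y - x) * j"
      using h unfolding slopes_in_def by blast
    moreover from this have "1 + j \<in> K"
      using absorbs unit_subgroup_one[OF K] by blast
    ultimately show "\<exists>u\<in>K. (y + h y) - (x + h x) = (y - x) * u"
      by (intro bexI[of _ "1 + j"]) (auto simp: algebra_simps)
  qed
  then have "(\<lambda>x. x + h x) \<in> AGammaL1"
    using cyc_aut_if_slopes_in[OF K] normal unfolding cyc_normal_def by blast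
  from AGammaL1_additive[OF this, of x y] show ?thesis
    by (simp add: algebra_simps)
qed

lemma slopes_in_rad_step:
  fixes I :: "'a::{comm_ring_1,finite} set"
  assumes local: "local_ring TYPE('a)" and I: "is_ideal I" and "c \<in> I" "d \<in> I"
  shows "slopes_in I (\<lambda>x. if x \<in> rad then 0 else c + d * x)"
  unfolding slopes_in_def
proof (intro allI)
  fix x y :: 'a
  let ?h = "\<lambda>x. if x \<in> rad then 0 else c + d * x"
  show "\<exists>j\<in>I. ?h y - ?h x = (y - x) * j"
  proof (cases "(x \<in> rad) = (y \<in> rad)")
    case True
    then have "?h y - ?h x = (y - x) * (if x \<in> rad then 0 else d)"
      by (simp add: algebra_simps)
    then show ?thesis
      using ideal_0[OF I] \<open>d \<in> I\<close> by (metis (full_types))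
  next
    case False
    then obtain w where w: "1 = (y - x) * w"
      using diff_notin_rad[OF local] unit_iff_notin_rad[OF local] by (metis dvdE)
    have "c + d * z \<in> I" for z
      using ideal_add[OF I \<open>c \<in> I\<close> ideal_mult_right[OF I \<open>d \<in> I\<close>]] .
    moreover have "?h y - ?h x = (if x \<in> rad then c + d * y else - (c + d * x))"
      using False by auto
    ultimately have "?h y - ?h x \<in> I"
      using ideal_uminus[OF I] by metis
    moreover have "?h y - ?h x = (y - x) * (w * (?h y - ?h x))"
      by (metis w mult.assoc mult_1)
    ultimately show ?thesis
      using ideal_mult_left[OF I] by blast
  qed
qed

lemma absorbed_ideal_neq_UNIV:
  assumes K: "is_unit_subgroup K"
    and absorbs: "{k + x | k x. k \<in> K \<and> x \<in> I} = K"
  shows "I \<noteq> UNIV"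
proof
  assume "I = UNIV"
  then have "1 + (- 1) \<in> K"
    using absorbs unit_subgroup_one[OF K] by blast
  then show False
    using unit_subgroup_unit[OF K] by fastforce
qed

context
  fixes K I :: "'a::{comm_ring_1,finite} set"
  assumes local: "local_ring TYPE('a)"
    and K: "is_unit_subgroup K"
    and normal: "cyc_normal K"
    and I: "is_ideal I"
    and absorbs: "{k + x | k x. k \<in> K \<and> x \<in> I} = K"
begin

lemma absorbed_ideal_mult_rad:
  assumes "d \<in> I" "m \<in> rad"
  shows "d * m = 0"
proof -
  let ?h = "\<lambda>x. if x \<in> rad then 0 else 0 + d * x"
  have "?h (m + 1) + ?h 0 = ?h m + ?h 1"
    by (rule additive_if_slopes_in_absorbed_ideal[OF K normal absorbs
          slopes_in_rad_step[OF local I ideal_0[OF I] \<open>d \<in> I\<close>]])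
  moreover have "(1::'a) \<notin> rad"
    using unit_iff_notin_rad[OF local, of 1] by simp
  moreover from this have "m + 1 \<notin> rad"
    using ideal_diff[OF ideal_rad[OF local], of "m + 1" m] \<open>m \<in> rad\<close> by auto
  ultimately have "d * (m + 1) = d"
    using \<open>m \<in> rad\<close> ideal_0[OF ideal_rad[OF local]] by simp
  then show ?thesis
    by (simp add: distrib_left)
qed

lemma absorbed_ideal_eq_0:
  fixes x :: 'a
  assumes "c \<in> I" "x \<notin> rad" "x - 1 \<notin> rad"
  shows "c = 0"
proof -
  let ?h = "\<lambda>x. if x \<in> rad then 0 else c + 0 * x"
  have "?h (x + - 1) + ?h 0 = ?h x + ?h (- 1)"
    by (rule additive_if_slopes_in_absorbed_ideal[OF K normal absorbs
          slopes_in_rad_step[OF local I \<open>c \<in> I\<close> ideal_0[OF I]]])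
  moreover have "(- 1::'a) \<notin> rad"
    using unit_iff_notin_rad[OF local, of "- 1"] by simp
  ultimately show ?thesis
    using assms ideal_0[OF ideal_rad[OF local]] by simp
qed

end

theorem theorem1p4:
  fixes K I :: "'a::{comm_ring_1, finite} set"
  assumes "local_ring TYPE('a)"
    and "is_unit_subgroup K"
    and "cyc_normal K"
    and "is_ideal I"
    and "{k + x | k x. k \<in> K \<and> x \<in> I} = K"
  shows "(card (residue_field :: 'a set set) \<noteq> 2 \<longrightarrow> I = {0}) \<and>
         (card (residue_field :: 'a set set) = 2 \<longrightarrow> I \<subseteq> I0)"
proof (intro conjI impI)
  have "I \<subseteq> rad"
    using proper_ideal_subset_rad[OF assms(1,4) absorbed_ideal_neq_UNIV[OF assms(2,5)]] .
  then show "I \<subseteq> I0"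
    using absorbed_ideal_mult_rad[OF assms] unfolding I0_def by blast
next
  assume "card (residue_field :: 'a set set) \<noteq> 2"
  then obtain x :: 'a where "x \<notin> rad" "x - 1 \<notin> rad"
    using card_residue_field_eq_2[OF assms(1)] by blast
  then show "I = {0}"
    using absorbed_ideal_eq_0[OF assms] ideal_0[OF assms(4)] by blast
qed

end
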